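(* The domain $\mathcal{SPL}$ of single-plateaued preferences is a maximal domain for own-peak-onliness, efficiency, the equal division guarantee, and not obvious manipulability (NOM). That is: $\mathcal{SP}\subseteq\mathcal{SPL}$; there exists a rule on $\mathcal{E}_{\mathcal{SPL}}$ satisfying these four properties; and for every domain $\overline{\mathcal{D}}$ with $\mathcal{SPL}\subsetneq\overline{\mathcal{D}}\subseteq\mathcal{U}$ there is no rule on $\mathcal{E}_{\overline{\mathcal{D}}}$ satisfying these four properties.
   Context: Let $N=\{1,\dots,n\}$ be a finite set of agents. $\mathcal{U}$ is the set of all continuous complete preorders $R_i$ on $\mathbb{R}_+\cup\{\infty\}$ ($P_i$ strict part, $I_i$ indifference). The peak is $p(R_i)=\{x:xR_iy\ \forall y\}$, $\underline{p}(R_i)=\inf p(R_i)$, $\overline{p}(R_i)=\sup p(R_i)$. $R_i$ is single-peaked if $p(R_i)$ is a singleton and for $x,x'\in\mathbb{R}_+$, $xP_ix'$ whenever $x'<x\le p(R_i)$ or $p(R_i)\le x<x'$ ($\mathcal{SP}$ = set of these). $R_i$ is single-plateaued if $p(R_i)=[\underline{p}(R_i),\overline{p}(R_i)]$ and for $x,x'\in\mathbb{R}_+$, $xP_ix'$ whenever $x'<x\le\underline{p}(R_i)$ or $\overline{p}(R_i)\le x<x'$ ($\mathcal{SPL}$ = set of these). For a domain $\mathcal{D}\subseteq\mathcal{U}$, an economy is $(R,\Omega)$ with $R\in\mathcal{D}^n$, $\Omega>0$, and $\mathcal{E}_{\mathcal{D}}$ is the set of these; a rule on $\mathcal{E}_{\mathcal{D}}$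 is a map $\varphi:\mathcal{E}_{\mathcal{D}}\to\mathbb{R}^n_+$ with $\sum_j\varphi_j(R,\Omega)=\Omega$. Properties (on $\mathcal{E}_{\mathcal{D}}$): Efficiency: no $x\in\mathbb{R}^n_+$ with $\sum_jx_j=\Omega$ has $x_iR_i\varphi_i(R,\Omega)$ for all $i$ and $x_iP_i\varphi_i(R,\Omega)$ for some $i$. Own-peak-onliness: for $R_i'\in\mathcal{D}$ with $p(R_i')=p(R_i)$, $\varphi_i(R,\Omega)=\varphi_i(R_i',R_{-i},\Omega)$. Equal division guarantee: if $\Omega/n\in p(R_i)$ then $\varphi_i(R,\Omega)I_i\Omega/n$. Option set $O^\varphi(R_i,\Omega)=\{\varphi_i(R_i,R_{-i},\Omega):R_{-i}\in\mathcal{D}^{n-1}\}$; $R_i'\in\mathcal{D}$ is a manipulation at $(R_i,\Omega)$ if $\varphi_i(R_i',R_{-i},\Omega)P_i\varphi_i(R_i,R_{-i},\Omega)$ for some $R_{-i}\in\mathcal{D}^{n-1}$, and an obvious manipulation if moreover each $x'\in O^\varphi(R_i',\Omega)$ satisfies $x'P_ix$ for some $x\in O^\varphi(R_i,\Omega)$; NOM means no obvious manipulation exists. *)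

theory Defs
  imports "HOL-Analysis.Analysis" "HOL-Library.Extended_Nonnegative_Real" "HOL-Library.FuncSet"
begin

text \<open>Consumption space R_+ \<union> {\<infinity>} is rendered as ennreal (order topology = [0,\<infinity>]).
  A preference is a binary relation R x y meaning "x R y" (x weakly preferred to y).\<close>

type_synonym pref = "ennreal \<Rightarrow> ennreal \<Rightarrow> bool"

definition strict :: "pref \<Rightarrow> ennreal \<Rightarrow> ennreal \<Rightarrow> bool" where
  "strict R x y \<longleftrightarrow> R x y \<and> \<not> R y x"

definition indiff :: "pref \<Rightarrow> ennreal \<Rightarrow> ennreal \<Rightarrow> bool" where
  "indiff R x y \<longleftrightarrow> R x y \<and> R y x"

definition complete_preorder :: "pref \<Rightarrow> bool" where
  "complete_preorder R \<longleftrightarrow> (\<forall>x y. R x y \<or> R y x) \<and> (\<forall>x y z. R x y \<longrightarrow> R y z \<longrightarrow> R x z)"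

definition continuous_pref :: "pref \<Rightarrow> bool" where
  "continuous_pref R \<longleftrightarrow> (\<forall>x. closed {y. R y x} \<and> closed {y. R x y})"

definition U :: "pref set" where
  "U = {R. complete_preorder R \<and> continuous_pref R}"

definition peak :: "pref \<Rightarrow> ennreal set" where
  "peak R = {x. \<forall>y. R x y}"

definition peak_lo :: "pref \<Rightarrow> ennreal" where
  "peak_lo R = Inf (peak R)"

definition peak_hi :: "pref \<Rightarrow> ennreal" where
  "peak_hi R = Sup (peak R)"

definition SP :: "pref set" where
  "SP = {R \<in> U. \<exists>a. peak R = {a} \<and>
      (\<forall>x x'. x < \<infinity> \<longrightarrow> x' < \<infinity> \<longrightarrow> ((x' < x \<and> x \<le> a) \<or> (a \<le> x \<and> x < x')) \<longrightarrow> strict R x x')}"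

definition SPL :: "pref set" where
  "SPL = {R \<in> U. peak R = {peak_lo R .. peak_hi R} \<and>
      (\<forall>x x'. x < \<infinity> \<longrightarrow> x' < \<infinity> \<longrightarrow>
         ((x' < x \<and> x \<le> peak_lo R) \<or> (peak_hi R \<le> x \<and> x < x')) \<longrightarrow> strict R x x')}"

definition agents :: "nat \<Rightarrow> nat set" where
  "agents n = {1..n}"

definition profiles :: "pref set \<Rightarrow> nat \<Rightarrow> (nat \<Rightarrow> pref) set" where
  "profiles D n = PiE (agents n) (\<lambda>_. D)"

type_synonym rule = "(nat \<Rightarrow> pref) \<Rightarrow> real \<Rightarrow> nat \<Rightarrow> real"

definition is_rule :: "pref set \<Rightarrow> nat \<Rightarrow> rule \<Rightarrow> bool" where
  "is_rule D n \<phi> \<longleftrightarrow> (\<forall>R\<in>profiles D n. \<forall>\<Omega>>0.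
      (\<forall>i\<in>agents n. 0 \<le> \<phi> R \<Omega> i) \<and> (\<Sum>i\<in>agents n. \<phi> R \<Omega> i) = \<Omega>)"

definition efficient :: "pref set \<Rightarrow> nat \<Rightarrow> rule \<Rightarrow> bool" where
  "efficient D n \<phi> \<longleftrightarrow> (\<forall>R\<in>profiles D n. \<forall>\<Omega>>0.
      \<not> (\<exists>x::nat \<Rightarrow> real. (\<forall>i\<in>agents n. 0 \<le> x i) \<and> (\<Sum>i\<in>agents n. x i) = \<Omega> \<and>
            (\<forall>i\<in>agents n. R i (ennreal (x i)) (ennreal (\<phi> R \<Omega> i))) \<and>
            (\<exists>i\<in>agents n. strict (R i) (ennreal (x i)) (ennreal (\<phi> R \<Omega> i)))))"

definition own_peak_only :: "pref set \<Rightarrow> nat \<Rightarrow> rule \<Rightarrow> bool" where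
  "own_peak_only D n \<phi> \<longleftrightarrow> (\<forall>R\<in>profiles D n. \<forall>\<Omega>>0. \<forall>i\<in>agents n. \<forall>R'\<in>D.
      peak R' = peak (R i) \<longrightarrow> \<phi> R \<Omega> i = \<phi> (R(i := R')) \<Omega> i)"

definition equal_division_guarantee :: "pref set \<Rightarrow> nat \<Rightarrow> rule \<Rightarrow> bool" where
  "equal_division_guarantee D n \<phi> \<longleftrightarrow> (\<forall>R\<in>profiles D n. \<forall>\<Omega>>0. \<forall>i\<in>agents n.
      ennreal (\<Omega> / real n) \<in> peak (R i) \<longrightarrow>
      indiff (R i) (ennreal (\<phi> R \<Omega> i)) (ennreal (\<Omega> / real n)))"

definition option_set :: "pref set \<Rightarrow> nat \<Rightarrow> rule \<Rightarrow> nat \<Rightarrow> pref \<Rightarrow> real \<Rightarrow> real set" where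
  "option_set D n \<phi> i Ri \<Omega> = {\<phi> R \<Omega> i | R. R \<in> profiles D n \<and> R i = Ri}"

definition manipulation :: "pref set \<Rightarrow> nat \<Rightarrow> rule \<Rightarrow> nat \<Rightarrow> pref \<Rightarrow> real \<Rightarrow> pref \<Rightarrow> bool" where
  "manipulation D n \<phi> i Ri \<Omega> Ri' \<longleftrightarrow> Ri' \<in> D \<and>
     (\<exists>R\<in>profiles D n. R i = Ri \<and>
        strict Ri (ennreal (\<phi> (R(i := Ri')) \<Omega> i)) (ennreal (\<phi> R \<Omega> i)))"

definition obvious_manipulation :: "pref set \<Rightarrow> nat \<Rightarrow> rule \<Rightarrow> nat \<Rightarrow> pref \<Rightarrow> real \<Rightarrow> pref \<Rightarrow> bool" where
  "obvious_manipulation D n \<phi> i Ri \<Omega> Ri' \<longleftrightarrow> manipulation D n \<phi> i Ri \<Omega> Ri' \<and>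
     (\<forall>x'\<in>option_set D n \<phi> i Ri' \<Omega>. \<exists>x\<in>option_set D n \<phi> i Ri \<Omega>.
        strict Ri (ennreal x') (ennreal x))"

definition NOM :: "pref set \<Rightarrow> nat \<Rightarrow> rule \<Rightarrow> bool" where
  "NOM D n \<phi> \<longleftrightarrow> (\<forall>i\<in>agents n. \<forall>Ri\<in>D. \<forall>\<Omega>>0. \<forall>Ri'.
      \<not> obvious_manipulation D n \<phi> i Ri \<Omega> Ri')"

definition good_rule :: "pref set \<Rightarrow> nat \<Rightarrow> rule \<Rightarrow> bool" where
  "good_rule D n \<phi> \<longleftrightarrow> is_rule D n \<phi> \<and> own_peak_only D n \<phi> \<and> efficient D n \<phi> \<and>
     equal_division_guarantee D n \<phi> \<and> NOM D n \<phi>"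

end

theory Submission
  imports Defs
begin

text \<open>Existence: moving every agent from the appropriate end of his plateau proportionally towards
  the equal share \<open>\<Omega>/n\<close> (or to a point of his plateau when the plateaus are compatible with \<open>\<Omega>\<close>)
  is efficient, depends only on peaks, and leaves every agent with a share he weakly prefers to
  \<open>\<Omega>/n\<close>. Given the equal division guarantee, this last property is equivalent to NOM on any
  domain containing the single-peaked preferences, because reporting a single peak at \<open>\<Omega>/n\<close>
  secures exactly \<open>\<Omega>/n\<close>.

  Maximality: on a larger domain a good rule therefore still gives everybody a share weakly
  preferred to \<open>\<Omega>/n\<close>, and by own-peak-onliness the same holds for the single-plateaued preference
  with the agent's peak. Confronting a preference \<open>R\<close> of the domain with single-peaked opponents
  whose shares are pinned down in this way, a gap in the peak of \<open>R\<close>, or a failure of strict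
  monotonicity to the left or to the right of it, yields a Pareto improvement between two agents.\<close>

lemma U_refl: "R \<in> U \<Longrightarrow> R x x"
  unfolding U_def complete_preorder_def by blast

lemma U_total: "R \<in> U \<Longrightarrow> R x y \<or> R y x"
  unfolding U_def complete_preorder_def by blast

lemma U_trans: "R \<in> U \<Longrightarrow> R x y \<Longrightarrow> R y z \<Longrightarrow> R x z"
  unfolding U_def complete_preorder_def by blast

lemma U_not_strict_iff: "R \<in> U \<Longrightarrow> \<not> strict R x y \<longleftrightarrow> R y x"
  unfolding strict_def using U_total by blast

lemma strict_irrefl: "\<not> strict R x x"
  unfolding strict_def by simp

lemma finite_has_pref_maximum:
  assumes R: "R \<in> U" and "finite F" "F \<noteq> {}"
  shows "\<exists>m. \<forall>x\<in>F. R m x"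
  using \<open>finite F\<close> \<open>F \<noteq> {}\<close>
proof (induction F rule: finite_ne_induct)
  case (singleton x)
  then show ?case using U_refl[OF R] by auto
next
  case (insert x F)
  then obtain m where m: "\<forall>y\<in>F. R m y" by blast
  show ?case
  proof (cases "R m x")
    case True
    then show ?thesis using m by auto
  next
    case False
    then have "R x m" using U_total[OF R] by blast
    then show ?thesis using m U_trans[OF R] U_refl[OF R] by blast
  qed
qed

lemma peak_eq_Inter: "peak R = (\<Inter>x. {y. R y x})"
  unfolding peak_def by auto

lemma closed_peak: "R \<in> U \<Longrightarrow> closed (peak R)"
  unfolding peak_eq_Inter U_def continuous_pref_def by blast

lemma peak_nonempty:
  assumes R: "R \<in> U"
  shows "peak R \<noteq> {}"
proof -
  have "UNIV \<inter> (\<Inter>x\<in>UNIV. {y. R y x}) \<noteq> {}"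
  proof (rule compact_imp_fip_image[OF compact_UNIV])
    show "closed {y. R y x}" for x
      using R unfolding U_def continuous_pref_def by blast
    show "UNIV \<inter> (\<Inter>x\<in>F. {y. R y x}) \<noteq> {}" if "finite F" for F :: "ennreal set"
      using finite_has_pref_maximum[OF R that] by (cases "F = {}") auto
  qed
  then show ?thesis unfolding peak_eq_Inter by auto
qed

lemma peak_lo_in_peak: "R \<in> U \<Longrightarrow> peak_lo R \<in> peak R"
  unfolding peak_lo_def by (rule closed_contains_Inf_cl[OF closed_peak peak_nonempty])

lemma peak_hi_in_peak: "R \<in> U \<Longrightarrow> peak_hi R \<in> peak R"
  unfolding peak_hi_def by (rule closed_contains_Sup_cl[OF closed_peak peak_nonempty])

lemma peak_subset_peak_lo_hi: "peak R \<subseteq> {peak_lo R..peak_hi R}"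
  unfolding peak_lo_def peak_hi_def by (auto intro: Inf_lower Sup_upper)

lemma peak_lo_le_peak_hi: "R \<in> U \<Longrightarrow> peak_lo R \<le> peak_hi R"
  using peak_lo_in_peak peak_subset_peak_lo_hi by fastforce

lemma peak_best: "x \<in> peak R \<Longrightarrow> R x y"
  unfolding peak_def by blast

lemma mem_peak_if_pref: "R \<in> U \<Longrightarrow> x \<in> peak R \<Longrightarrow> R y x \<Longrightarrow> y \<in> peak R"
  unfolding peak_def using U_trans by blast

lemma SP_subset_SPL: "SP \<subseteq> SPL"
proof
  fix R
  assume "R \<in> SP"
  then obtain a where R: "R \<in> U" "peak R = {a}"
    and mono: "\<forall>x x'. x < \<infinity> \<longrightarrow> x' < \<infinity> \<longrightarrow> (x' < x \<and> x \<le> a \<or> a \<le> x \<and> x < x') \<longrightarrow> strict R x x'"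
    unfolding SP_def by blast
  have "peak_lo R = a" "peak_hi R = a"
    unfolding peak_lo_def peak_hi_def R by auto
  then show "R \<in> SPL"
    unfolding SPL_def using R mono by simp
qed

lemma SPL_subset_U: "SPL \<subseteq> U"
  unfolding SPL_def by blast

lemma SPL_strict_left:
  assumes "R \<in> SPL" "0 \<le> x" "x < y" "ennreal y \<le> peak_lo R"
  shows "strict R (ennreal y) (ennreal x)"
  using assms unfolding SPL_def by (auto simp: ennreal_less_iff)

lemma SPL_strict_right:
  assumes "R \<in> SPL" "0 \<le> x" "x < y" "peak_hi R \<le> ennreal x"
  shows "strict R (ennreal x) (ennreal y)"
  using assms unfolding SPL_def by (auto simp: ennreal_less_iff)

lemma SPL_ge_if_pref_left:
  assumes "R \<in> SPL" "0 \<le> y" "ennreal x \<le> peak_lo R" "R (ennreal y) (ennreal x)"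
  shows "x \<le> y"
  using SPL_strict_left[OF assms(1,2), of x] assms(3,4) unfolding strict_def by force

lemma SPL_le_if_pref_right:
  assumes "R \<in> SPL" "0 \<le> x" "peak_hi R \<le> ennreal x" "R (ennreal y) (ennreal x)"
  shows "y \<le> x"
  using SPL_strict_right[OF assms(1,2), of y] assms(3,4) unfolding strict_def by force

lemma SPL_pref_toward_plateau_left:
  assumes R: "R \<in> SPL" and "0 \<le> c" "0 \<le> x"
    and between: "min (peak_lo R) (ennreal c) \<le> ennreal x" "ennreal x \<le> peak_lo R"
  shows "R (ennreal x) (ennreal c)"
proof (cases "ennreal x = peak_lo R")
  case True
  then show ?thesis using peak_best peak_lo_in_peak SPL_subset_U R by fastforce
next
  case False
  then have "c \<le> x" using between \<open>0 \<le> x\<close> by (auto simp: min_def split: if_splits)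
  then show ?thesis
    using SPL_strict_left[OF R \<open>0 \<le> c\<close>, of x] U_refl SPL_subset_U R between(2)
    unfolding strict_def by (cases "c = x") auto
qed

lemma SPL_pref_toward_plateau_right:
  assumes R: "R \<in> SPL" and "0 \<le> c" "0 \<le> x"
    and between: "peak_hi R \<le> ennreal x" "ennreal x \<le> max (peak_hi R) (ennreal c)"
  shows "R (ennreal x) (ennreal c)"
proof (cases "ennreal x = peak_hi R")
  case True
  then show ?thesis using peak_best peak_hi_in_peak SPL_subset_U R by fastforce
next
  case False
  then have "x \<le> c" using between \<open>0 \<le> c\<close> by (auto simp: max_def split: if_splits)
  then show ?thesis
    using SPL_strict_right[OF R \<open>0 \<le> x\<close>, of c] U_refl SPL_subset_U R between(1)
    unfolding strict_def by (cases "c = x") auto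
qed

lemma pref_chain_step:
  assumes R: "R \<in> U" and "R (t k) (t 0)" "0 < k"
  shows "\<exists>i<k. R (t (Suc i)) (t i)"
  using assms(2,3)
proof (induction k)
  case 0
  then show ?case by simp
next
  case (Suc k)
  show ?case
  proof (cases "R (t (Suc k)) (t k)")
    case True
    then show ?thesis by blast
  next
    case False
    then have "R (t k) (t (Suc k))"
      using U_total[OF R] by blast
    then have "R (t k) (t 0)"
      using U_trans[OF R] Suc.prems(1) by blast
    moreover have "0 < k"
      using False Suc.prems(1) by (cases k) auto
    ultimately show ?thesis
      using Suc.IH by (meson less_SucI)
  qed
qed

lemma strictly_preferred_real_above:
  assumes R: "R \<in> U" and "0 \<le> z" and better: "strict R w (ennreal z)" and above: "ennreal z < w"
  shows "\<exists>c. z < c \<and> strict R (ennreal c) (ennreal z)"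
proof (cases "w = top")
  case False
  then obtain c where "0 \<le> c" "w = ennreal c"
    by (cases w rule: ennreal_cases) auto
  then show ?thesis
    using better above \<open>0 \<le> z\<close> by (auto simp: ennreal_less_iff)
next
  case True
  define S where "S = - {y. R (ennreal z) y}"
  have "open S"
    using R unfolding S_def U_def continuous_pref_def by (simp add: open_Compl)
  moreover have "top \<in> S"
    using better True unfolding S_def strict_def by simp
  ultimately have "\<forall>\<^sub>F m in sequentially. of_nat m \<in> S"
    by (rule topological_tendstoD[OF of_nat_tendsto_top_ennreal])
  moreover have "\<forall>\<^sub>F m in sequentially. ennreal z < of_nat m"
    by (rule order_tendstoD(1)[OF of_nat_tendsto_top_ennreal]) simp
  ultimately obtain m where "of_nat m \<in> S" "ennreal z < of_nat m"
    using eventually_happens[OF eventually_conj] by fastforce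
  then have "z < real m" "strict R (ennreal (real m)) (ennreal z)"
    using R U_not_strict_iff \<open>0 \<le> z\<close> unfolding S_def
    by (auto simp: ennreal_of_nat_eq_real_of_nat ennreal_less_iff)
  then show ?thesis by blast
qed

section \<open>Continuous plateau preferences\<close>

text \<open>Composing with \<open>compress\<close>, a continuous strictly increasing map of \<open>[0,\<infinity>]\<close> onto \<open>[0,1]\<close>,
  turns piecewise linear real utilities into utilities on \<open>ennreal\<close> that are continuous at \<open>\<infinity>\<close> too.\<close>

definition compress :: "ennreal \<Rightarrow> real" where
  "compress t = enn2real (1 - inverse (1 + t))"

lemma compress_ennreal: "0 \<le> t \<Longrightarrow> compress (ennreal t) = t / (1 + t)"
proof -
  assume t: "0 \<le> t"
  have "inverse (1 + ennreal t) = inverse (ennreal (1 + t))"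
    using t by simp
  also have "\<dots> = ennreal (inverse (1 + t))"
    by (rule inverse_ennreal) (use t in simp)
  finally have "inverse (1 + ennreal t) = ennreal (1 / (1 + t))"
    by (simp add: divide_inverse)
  then have "1 - inverse (1 + ennreal t) = ennreal (1 - 1 / (1 + t))"
    using t by (simp add: ennreal_minus[symmetric])
  moreover have "1 - 1 / (1 + t) = t / (1 + t)"
    using t by (simp add: field_simps)
  ultimately show ?thesis
    unfolding compress_def using t by simp
qed

lemma compress_top: "compress top = 1"
  unfolding compress_def by simp

lemma continuous_on_compress: "continuous_on UNIV compress"
  unfolding continuous_on_def compress_def
proof
  fix x :: ennreal
  have fin: "1 - inverse (1 + x) < top"
    by (rule order.strict_trans1[OF diff_le_self_ennreal]) simp
  have "continuous_on UNIV (\<lambda>t::ennreal. 1 - inverse (1 + t))"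
    by (intro continuous_on_diff_ennreal continuous_intros) auto
  then have "((\<lambda>t. 1 - inverse (1 + t)) \<longlongrightarrow> ennreal (enn2real (1 - inverse (1 + x)))) (at x)"
    using fin by (simp add: continuous_on_def)
  then show "((\<lambda>t. enn2real (1 - inverse (1 + t))) \<longlongrightarrow> enn2real (1 - inverse (1 + x))) (at x within UNIV)"
    by (rule tendsto_enn2real) simp
qed

lemma strict_mono_compress: "strict_mono compress"
proof
  fix x y :: ennreal
  assume "x < y"
  then have "x < top"
    using top.not_eq_extremum by fastforce
  then obtain s where s: "0 \<le> s" "x = ennreal s"
    by (cases x rule: ennreal_cases) auto
  show "compress x < compress y"
  proof (cases "y = top")
    case True
    then show ?thesis using s by (simp add: compress_ennreal compress_top)
  next
    case False
    then obtain t where t: "0 \<le> t" "y = ennreal t" by (cases y rule: ennreal_cases) auto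
    then have "s < t" using \<open>x < y\<close> s by (simp add: ennreal_less_iff)
    then show ?thesis using s t by (simp add: compress_ennreal field_simps)
  qed
qed

lemma compress_less_iff: "compress x < compress y \<longleftrightarrow> x < y"
  by (rule strict_mono_less[OF strict_mono_compress])

lemma compress_le_iff: "compress x \<le> compress y \<longleftrightarrow> x \<le> y"
  by (rule strict_mono_less_eq[OF strict_mono_compress])

definition utility_pref :: "(ennreal \<Rightarrow> real) \<Rightarrow> pref" where
  "utility_pref u = (\<lambda>x y. u y \<le> u x)"

lemma utility_pref_in_U: "continuous_on UNIV u \<Longrightarrow> utility_pref u \<in> U"
  unfolding U_def complete_preorder_def continuous_pref_def utility_pref_def
  by (auto intro!: closed_Collect_le continuous_on_const)

lemma strict_utility_pref: "strict (utility_pref u) x y \<longleftrightarrow> u y < u x"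
  unfolding strict_def utility_pref_def by auto

lemma peak_utility_pref:
  assumes "\<And>t. u t \<le> 0" "u t\<^sub>0 = 0"
  shows "peak (utility_pref u) = {t. u t = 0}"
  unfolding peak_def utility_pref_def using assms by (metis order_antisym)

text \<open>Varying the right slope \<open>k\<close> changes the preference but not its peak.\<close>

definition plateau_utility :: "ennreal \<Rightarrow> ennreal \<Rightarrow> real \<Rightarrow> ennreal \<Rightarrow> real" where
  "plateau_utility lo hi k t =
     - (max (compress lo - compress t) 0 + k * max (compress t - compress hi) 0)"

definition plateau :: "ennreal \<Rightarrow> ennreal \<Rightarrow> real \<Rightarrow> pref" where
  "plateau lo hi k = utility_pref (plateau_utility lo hi k)"

lemma plateau_in_U: "plateau lo hi k \<in> U"
  unfolding plateau_def plateau_utility_def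
  by (intro utility_pref_in_U continuous_intros continuous_on_compose2[OF continuous_on_compress]) auto

lemma plateau_utility_left:
  "lo \<le> hi \<Longrightarrow> t \<le> lo \<Longrightarrow> plateau_utility lo hi k t = compress t - compress lo"
  unfolding plateau_utility_def using compress_le_iff[of t lo] compress_le_iff[of t hi] by simp

lemma plateau_utility_right:
  "lo \<le> hi \<Longrightarrow> hi \<le> t \<Longrightarrow> plateau_utility lo hi k t = k * (compress hi - compress t)"
  unfolding plateau_utility_def using compress_le_iff[of lo t] compress_le_iff[of hi t]
  by (simp add: algebra_simps)

lemma plateau_utility_eq_0_iff:
  assumes "0 < k"
  shows "plateau_utility lo hi k t = 0 \<longleftrightarrow> lo \<le> t \<and> t \<le> hi"
proof -
  let ?A = "max (compress lo - compress t) 0" and ?B = "max (compress t - compress hi) 0"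
  have "?A + k * ?B = 0 \<longleftrightarrow> ?A = 0 \<and> k * ?B = 0"
    using assms by (intro add_nonneg_eq_0_iff) simp_all
  also have "\<dots> \<longleftrightarrow> compress lo \<le> compress t \<and> compress t \<le> compress hi"
    using assms by auto
  finally show ?thesis
    unfolding plateau_utility_def neg_equal_0_iff_equal compress_le_iff .
qed

lemma plateau_utility_nonpos: "0 \<le> k \<Longrightarrow> plateau_utility lo hi k t \<le> 0"
  unfolding plateau_utility_def
  using mult_nonneg_nonneg[of k "max (compress t - compress hi) 0"] by linarith

lemma peak_plateau:
  assumes "lo \<le> hi" "0 < k"
  shows "peak (plateau lo hi k) = {lo..hi}"
proof -
  have "plateau_utility lo hi k lo = 0"
    using assms by (simp add: plateau_utility_eq_0_iff)
  then show ?thesis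
    unfolding plateau_def using assms
    by (subst peak_utility_pref) (auto simp: plateau_utility_nonpos plateau_utility_eq_0_iff)
qed

lemma peak_lo_plateau: "lo \<le> hi \<Longrightarrow> 0 < k \<Longrightarrow> peak_lo (plateau lo hi k) = lo"
  unfolding peak_lo_def by (simp add: peak_plateau)

lemma peak_hi_plateau: "lo \<le> hi \<Longrightarrow> 0 < k \<Longrightarrow> peak_hi (plateau lo hi k) = hi"
  unfolding peak_hi_def by (simp add: peak_plateau)

lemma plateau_in_SPL:
  assumes "lo \<le> hi" "0 < k"
  shows "plateau lo hi k \<in> SPL"
  unfolding SPL_def
  using assms plateau_in_U peak_plateau[OF assms] peak_lo_plateau[OF assms] peak_hi_plateau[OF assms]
  by (auto simp: plateau_def strict_utility_pref plateau_utility_left plateau_utility_right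
      compress_less_iff)

lemma plateau_steep_right:
  assumes "x < q" "q < y"
  shows "\<exists>k>0. strict (plateau q q k) x y"
proof -
  define d\<^sub>1 d\<^sub>2 where "d\<^sub>1 = compress q - compress x" and "d\<^sub>2 = compress y - compress q"
  have d: "0 < d\<^sub>1" "0 < d\<^sub>2"
    using assms by (simp_all add: d\<^sub>1_def d\<^sub>2_def compress_less_iff)
  have u: "plateau_utility q q k x = - d\<^sub>1" "plateau_utility q q k y = - (k * d\<^sub>2)" for k
    using assms by (simp_all add: plateau_utility_left plateau_utility_right d\<^sub>1_def d\<^sub>2_def algebra_simps)
  have "strict (plateau q q (2 * d\<^sub>1 / d\<^sub>2)) x y"
    using d by (simp add: plateau_def strict_utility_pref u)
  moreover have "0 < 2 * d\<^sub>1 / d\<^sub>2"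
    using d by simp
  ultimately show ?thesis by blast
qed

lemma plateau_flat_right:
  assumes "x < q" "q < y"
  shows "\<exists>k>0. strict (plateau q q k) y x"
proof -
  define d\<^sub>1 d\<^sub>2 where "d\<^sub>1 = compress q - compress x" and "d\<^sub>2 = compress y - compress q"
  have d: "0 < d\<^sub>1" "0 < d\<^sub>2"
    using assms by (simp_all add: d\<^sub>1_def d\<^sub>2_def compress_less_iff)
  have u: "plateau_utility q q k x = - d\<^sub>1" "plateau_utility q q k y = - (k * d\<^sub>2)" for k
    using assms by (simp_all add: plateau_utility_left plateau_utility_right d\<^sub>1_def d\<^sub>2_def algebra_simps)
  have "strict (plateau q q (d\<^sub>1 / (2 * d\<^sub>2))) y x"
    using d by (simp add: plateau_def strict_utility_pref u)
  moreover have "0 < d\<^sub>1 / (2 * d\<^sub>2)"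
    using d by simp
  ultimately show ?thesis by blast
qed

lemma finite_agents: "finite (agents n)"
  unfolding agents_def by simp

lemma card_agents: "card (agents n) = n"
  unfolding agents_def by simp

lemma one_two_in_agents: "2 \<le> n \<Longrightarrow> 1 \<in> agents n" "2 \<le> n \<Longrightarrow> 2 \<in> agents n"
  unfolding agents_def by auto

lemma profiles_mem: "R \<in> profiles D n \<Longrightarrow> j \<in> agents n \<Longrightarrow> R j \<in> D"
  unfolding profiles_def by (rule PiE_mem)

lemma profiles_fun_upd: "R \<in> profiles D n \<Longrightarrow> i \<in> agents n \<Longrightarrow> R' \<in> D \<Longrightarrow> R(i := R') \<in> profiles D n"
  unfolding profiles_def using PiE_fun_upd[of R' "\<lambda>_. D" i R "agents n"] by (simp add: insert_absorb)

lemma restrict_in_profiles: "(\<And>j. j \<in> agents n \<Longrightarrow> f j \<in> D) \<Longrightarrow> restrict f (agents n) \<in> profiles D n"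
  unfolding profiles_def by (simp add: restrict_PiE_iff)

lemma sum_agents_except:
  fixes f :: "nat \<Rightarrow> real"
  assumes "S \<subseteq> agents n" "\<And>j. j \<in> agents n \<Longrightarrow> j \<notin> S \<Longrightarrow> f j = c"
  shows "sum f (agents n) = sum f S + real (n - card S) * c"
proof -
  have "sum f (agents n) = sum f (agents n - S) + sum f S"
    using assms(1) finite_agents by (rule sum.subset_diff)
  also have "sum f (agents n - S) = real (card (agents n - S)) * c"
    using assms(2) by simp
  also have "card (agents n - S) = n - card S"
    using assms(1) finite_agents by (simp add: card_Diff_subset finite_subset card_agents)
  finally show ?thesis by simp
qed

lemma sum_fun_upd:
  fixes f :: "'a \<Rightarrow> 'b::ab_group_add"
  assumes "finite N" "i \<in> N"
  shows "sum (f(i := a)) N = sum f N - f i + a"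
  using assms by (simp add: sum.remove[of N i] sum.cong[of "N - {i}" "N - {i}" "f(i := a)" f])

lemma share_eq_equal_division_if_point_peak:
  assumes "is_rule D n \<phi>" "equal_division_guarantee D n \<phi>" "R \<in> profiles D n" "0 < \<Omega>"
    "i \<in> agents n" "R i \<in> U" "peak (R i) = {ennreal (\<Omega> / real n)}"
  shows "\<phi> R \<Omega> i = \<Omega> / real n"
proof -
  have "R i (ennreal (\<phi> R \<Omega> i)) (ennreal (\<Omega> / real n))"
    using assms(2-5,7) unfolding equal_division_guarantee_def indiff_def by blast
  then have "ennreal (\<phi> R \<Omega> i) = ennreal (\<Omega> / real n)"
    using mem_peak_if_pref[OF assms(6)] assms(7) by blast
  moreover have "0 \<le> \<phi> R \<Omega> i"
    using assms(1,3-5) unfolding is_rule_def by blast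
  ultimately show ?thesis
    using assms(4) by simp
qed

lemma equal_division_in_option_set:
  assumes rule: "is_rule D n \<phi>" and edg: "equal_division_guarantee D n \<phi>" and "SPL \<subseteq> D"
    and "R\<^sub>i \<in> D" "0 < \<Omega>" and i: "i \<in> agents n"
  shows "\<Omega> / real n \<in> option_set D n \<phi> i R\<^sub>i \<Omega>"
proof -
  define c where "c = \<Omega> / real n"
  define C where "C = plateau (ennreal c) (ennreal c) 1"
  define R where "R = restrict (\<lambda>j. if j = i then R\<^sub>i else C) (agents n)"
  have "C \<in> D"
    using plateau_in_SPL[of "ennreal c" "ennreal c" 1] \<open>SPL \<subseteq> D\<close> by (auto simp: C_def)
  then have R: "R \<in> profiles D n"
    unfolding R_def using \<open>R\<^sub>i \<in> D\<close> by (intro restrict_in_profiles) simp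
  have "\<phi> R \<Omega> j = c" if "j \<in> agents n" "j \<notin> {i}" for j
    unfolding c_def using that \<open>0 < \<Omega>\<close> plateau_in_U peak_plateau[of "ennreal c" "ennreal c" 1]
    by (intro share_eq_equal_division_if_point_peak[OF rule edg R]) (simp_all add: R_def C_def c_def)
  then have "\<Omega> = \<phi> R \<Omega> i + real (n - 1) * c"
    using sum_agents_except[of "{i}" n "\<phi> R \<Omega>" c] rule R \<open>0 < \<Omega>\<close> i unfolding is_rule_def by simp
  moreover have "0 < n"
    using i unfolding agents_def by simp
  ultimately have "\<phi> R \<Omega> i = c"
    by (simp add: c_def of_nat_diff field_simps)
  moreover have "R i = R\<^sub>i"
    using i by (simp add: R_def)
  ultimately show ?thesis
    unfolding option_set_def c_def using R by (intro CollectI exI[of _ R]) simp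
qed

lemma NOM_iff_pref_equal_division:
  assumes "SPL \<subseteq> D" "D \<subseteq> U" and rule: "is_rule D n \<phi>" and edg: "equal_division_guarantee D n \<phi>"
  shows "NOM D n \<phi> \<longleftrightarrow>
    (\<forall>R\<in>profiles D n. \<forall>\<Omega>>0. \<forall>i\<in>agents n. R i (ennreal (\<phi> R \<Omega> i)) (ennreal (\<Omega> / real n)))"
proof
  assume nom: "NOM D n \<phi>"
  show "\<forall>R\<in>profiles D n. \<forall>\<Omega>>0. \<forall>i\<in>agents n. R i (ennreal (\<phi> R \<Omega> i)) (ennreal (\<Omega> / real n))"
  proof (intro ballI allI impI, rule ccontr)
    fix R \<Omega> i
    assume R: "R \<in> profiles D n" and "0 < \<Omega>" and i: "i \<in> agents n"
      and "\<not> R i (ennreal (\<phi> R \<Omega> i)) (ennreal (\<Omega> / real n))"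
    then have worse: "strict (R i) (ennreal (\<Omega> / real n)) (ennreal (\<phi> R \<Omega> i))"
      using U_not_strict_iff profiles_mem \<open>D \<subseteq> U\<close> by blast
    define C where "C = plateau (ennreal (\<Omega> / real n)) (ennreal (\<Omega> / real n)) 1"
    have "C \<in> D"
      using plateau_in_SPL \<open>SPL \<subseteq> D\<close> by (auto simp: C_def)
    have C_gets_equal_division: "\<phi> S \<Omega> i = \<Omega> / real n" if "S \<in> profiles D n" "S i = C" for S
      using that \<open>0 < \<Omega>\<close> i plateau_in_U peak_plateau
      by (intro share_eq_equal_division_if_point_peak[OF rule edg]) (simp_all add: C_def)
    have "obvious_manipulation D n \<phi> i (R i) \<Omega> C"
      unfolding obvious_manipulation_def manipulation_def option_set_def
      using \<open>C \<in> D\<close> R worse C_gets_equal_division profiles_fun_upd[OF R i \<open>C \<in> D\<close>] by fastforce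
    then show False
      using nom i R \<open>0 < \<Omega>\<close> profiles_mem unfolding NOM_def by blast
  qed
next
  assume pref: "\<forall>R\<in>profiles D n. \<forall>\<Omega>>0. \<forall>i\<in>agents n. R i (ennreal (\<phi> R \<Omega> i)) (ennreal (\<Omega> / real n))"
  show "NOM D n \<phi>"
    unfolding NOM_def
  proof (intro ballI allI impI notI)
    fix i R\<^sub>i \<Omega> R\<^sub>i'
    assume "i \<in> agents n" "R\<^sub>i \<in> D" "0 < \<Omega>" and om: "obvious_manipulation D n \<phi> i R\<^sub>i \<Omega> R\<^sub>i'"
    then have "\<Omega> / real n \<in> option_set D n \<phi> i R\<^sub>i' \<Omega>"
      using equal_division_in_option_set[OF rule edg \<open>SPL \<subseteq> D\<close>]
      unfolding obvious_manipulation_def manipulation_def by blast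
    then obtain R where "R \<in> profiles D n" "R i = R\<^sub>i"
      "strict R\<^sub>i (ennreal (\<Omega> / real n)) (ennreal (\<phi> R \<Omega> i))"
      using om unfolding obvious_manipulation_def option_set_def by blast
    then show False
      using pref \<open>i \<in> agents n\<close> \<open>0 < \<Omega>\<close> unfolding strict_def by blast
  qed
qed

lemma not_efficient_if_transfer:
  assumes rule: "is_rule D n \<phi>" and "D \<subseteq> U" and R: "R \<in> profiles D n" and \<Omega>: "0 < \<Omega>"
    and ij: "i \<in> agents n" "j \<in> agents n" "i \<noteq> j"
    and y: "0 \<le> y\<^sub>i" "0 \<le> y\<^sub>j" "y\<^sub>i + y\<^sub>j = \<phi> R \<Omega> i + \<phi> R \<Omega> j"
    and better: "R i (ennreal y\<^sub>i) (ennreal (\<phi> R \<Omega> i))" "strict (R j) (ennreal y\<^sub>j) (ennreal (\<phi> R \<Omega> j))"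
  shows "\<not> efficient D n \<phi>"
proof
  assume eff: "efficient D n \<phi>"
  define x where "x = (\<phi> R \<Omega>)(i := y\<^sub>i, j := y\<^sub>j)"
  have "(\<Sum>k\<in>agents n. x k) = sum (\<phi> R \<Omega>) (agents n) - \<phi> R \<Omega> i + y\<^sub>i - \<phi> R \<Omega> j + y\<^sub>j"
    unfolding x_def using ij
    by (simp add: sum_fun_upd finite_agents fun_upd_other[OF not_sym[OF ij(3)]] del: fun_upd_apply)
  then have "(\<Sum>k\<in>agents n. x k) = \<Omega>"
    using rule R \<Omega> y(3) unfolding is_rule_def by simp
  moreover have "\<forall>k\<in>agents n. 0 \<le> x k"
    using rule R \<Omega> y unfolding x_def is_rule_def by simp
  moreover have "\<forall>k\<in>agents n. R k (ennreal (x k)) (ennreal (\<phi> R \<Omega> k))"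
    using better U_refl profiles_mem[OF R] \<open>D \<subseteq> U\<close> unfolding x_def strict_def by auto
  moreover have "strict (R j) (ennreal (x j)) (ennreal (\<phi> R \<Omega> j))"
    using better(2) by (simp add: x_def)
  ultimately show False
    using eff R \<Omega> ij(2) unfolding efficient_def by blast
qed

lemma SPL_no_pareto_improvement:
  assumes N: "finite N" and R: "\<And>i. i \<in> N \<Longrightarrow> R i \<in> SPL"
    and nonneg: "\<And>i. i \<in> N \<Longrightarrow> 0 \<le> x i \<and> 0 \<le> y i" and sums: "sum y N = sum x N"
    and weakly_better: "\<And>i. i \<in> N \<Longrightarrow> R i (ennreal (y i)) (ennreal (x i))"
    and position: "(\<forall>i\<in>N. ennreal (x i) \<le> peak_lo (R i)) \<or> (\<forall>i\<in>N. peak_hi (R i) \<le> ennreal (x i))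
      \<or> (\<forall>i\<in>N. ennreal (x i) \<in> peak (R i))"
    and k: "k \<in> N"
  shows "\<not> strict (R k) (ennreal (y k)) (ennreal (x k))"
  using position
proof (elim disjE)
  assume "\<forall>i\<in>N. ennreal (x i) \<le> peak_lo (R i)"
  then have "x i \<le> y i" if "i \<in> N" for i
    using SPL_ge_if_pref_left R nonneg weakly_better that by blast
  then have "x k = y k"
    using sum_mono_inv[OF sums[symmetric] _ k N] by blast
  then show ?thesis by (simp add: strict_irrefl)
next
  assume "\<forall>i\<in>N. peak_hi (R i) \<le> ennreal (x i)"
  then have "y i \<le> x i" if "i \<in> N" for i
    using SPL_le_if_pref_right R nonneg weakly_better that by blast
  then have "y k = x k"
    using sum_mono_inv[OF sums _ k N] by blast
  then show ?thesis by (simp add: strict_irrefl)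
next
  assume "\<forall>i\<in>N. ennreal (x i) \<in> peak (R i)"
  then show ?thesis
    using k peak_best unfolding strict_def by blast
qed

section \<open>A good rule on the single-plateaued domain\<close>

definition interpolate :: "'a set \<Rightarrow> ('a \<Rightarrow> real) \<Rightarrow> ('a \<Rightarrow> real) \<Rightarrow> real \<Rightarrow> 'a \<Rightarrow> real" where
  "interpolate N L H \<Omega> i = L i + (\<Omega> - sum L N) / (\<Sum>j\<in>N. H j - L j) * (H i - L i)"

lemma interpolate_weight:
  fixes L H :: "'a \<Rightarrow> real"
  assumes "finite N" "\<And>j. j \<in> N \<Longrightarrow> L j \<le> H j" "sum L N \<le> \<Omega>" "\<Omega> \<le> sum H N"
  shows "0 \<le> (\<Omega> - sum L N) / (\<Sum>j\<in>N. H j - L j)" "(\<Omega> - sum L N) / (\<Sum>j\<in>N. H j - L j) \<le> 1"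
proof -
  have d: "(\<Sum>j\<in>N. H j - L j) = sum H N - sum L N"
    by (rule sum_subtractf)
  show "0 \<le> (\<Omega> - sum L N) / (\<Sum>j\<in>N. H j - L j)"
    unfolding d using assms by simp
  show "(\<Omega> - sum L N) / (\<Sum>j\<in>N. H j - L j) \<le> 1"
    unfolding d using assms by (cases "sum L N = sum H N") (auto simp: divide_le_eq_1)
qed

lemma interpolate_bounds:
  assumes "finite N" "\<And>j. j \<in> N \<Longrightarrow> L j \<le> H j" "sum L N \<le> \<Omega>" "\<Omega> \<le> sum H N" "i \<in> N"
  shows "L i \<le> interpolate N L H \<Omega> i" "interpolate N L H \<Omega> i \<le> H i"
proof -
  define \<theta> where "\<theta> = (\<Omega> - sum L N) / (\<Sum>j\<in>N. H j - L j)"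
  have "0 \<le> \<theta>" "\<theta> \<le> 1" "L i \<le> H i"
    using interpolate_weight[OF assms(1-4)] assms(2,5) by (simp_all add: \<theta>_def)
  then have "0 \<le> \<theta> * (H i - L i)" "\<theta> * (H i - L i) \<le> H i - L i"
    by (simp_all add: mult_left_le_one_le)
  then show "L i \<le> interpolate N L H \<Omega> i" "interpolate N L H \<Omega> i \<le> H i"
    unfolding interpolate_def \<theta>_def[symmetric] by simp_all
qed

lemma interpolate_sum:
  assumes "finite N" "\<And>j. j \<in> N \<Longrightarrow> L j \<le> H j" "sum L N \<le> \<Omega>" "\<Omega> \<le> sum H N"
  shows "sum (interpolate N L H \<Omega>) N = \<Omega>"
proof -
  define d where "d = (\<Sum>j\<in>N. H j - L j)"
  have "sum (interpolate N L H \<Omega>) N = sum L N + (\<Omega> - sum L N) / d * d"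
    by (simp add: interpolate_def d_def sum.distrib sum_distrib_left)
  also have "(\<Omega> - sum L N) / d * d = \<Omega> - sum L N"
    using assms by (cases "d = 0") (simp_all add: d_def sum_subtractf)
  finally show ?thesis by simp
qed

definition cap :: "real \<Rightarrow> ennreal \<Rightarrow> real" where
  "cap \<Omega> a = enn2real (min a (ennreal \<Omega>))"

lemma ennreal_cap: "ennreal (cap \<Omega> a) = min a (ennreal \<Omega>)"
  unfolding cap_def by (simp add: min_less_iff_disj)

lemma cap_nonneg: "0 \<le> cap \<Omega> a"
  unfolding cap_def by simp

lemma cap_mono: "a \<le> b \<Longrightarrow> cap \<Omega> a \<le> cap \<Omega> b"
  unfolding cap_def by (rule enn2real_mono) (auto simp: min.coboundedI1 min_less_iff_disj)

lemma cap_less_imp_eq: "cap \<Omega> a < \<Omega> \<Longrightarrow> ennreal (cap \<Omega> a) = a"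
  using ennreal_cap[of \<Omega> a] cap_nonneg[of \<Omega> a]
  by (metis ennreal_less_iff min_def nless_le)

lemma equal_share:
  assumes "finite N" "N \<noteq> {}" "0 \<le> \<Omega>"
  shows "0 \<le> \<Omega> / real (card N)" "\<Omega> / real (card N) \<le> \<Omega>" "(\<Sum>j\<in>N. \<Omega> / real (card N)) = \<Omega>"
proof -
  have "1 \<le> real (card N)"
    using assms by (simp add: Suc_le_eq card_gt_0_iff)
  then show "0 \<le> \<Omega> / real (card N)" "\<Omega> / real (card N) \<le> \<Omega>" "(\<Sum>j\<in>N. \<Omega> / real (card N)) = \<Omega>"
    using assms(3) by (simp_all add: divide_le_eq mult_le_cancel_left1)
qed

text \<open>Peaks are capped at \<open>\<Omega>\<close> to make them real.\<close>

definition share :: "'a set \<Rightarrow> ('a \<Rightarrow> ennreal) \<Rightarrow> ('a \<Rightarrow> ennreal) \<Rightarrow> real \<Rightarrow> 'a \<Rightarrow> real" where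
  "share N lo hi \<Omega> =
     (let c = \<Omega> / real (card N); L = (\<lambda>j. cap \<Omega> (lo j)); H = (\<lambda>j. cap \<Omega> (hi j))
      in if \<Omega> \<le> sum L N then interpolate N (\<lambda>j. min (L j) c) L \<Omega>
         else if sum H N < \<Omega> then interpolate N H (\<lambda>j. max (H j) c) \<Omega>
         else interpolate N L H \<Omega>)"

lemma share_left_of_plateaus:
  assumes N: "finite N" "N \<noteq> {}" and \<Omega>: "0 \<le> \<Omega>" and demand: "\<Omega> \<le> (\<Sum>j\<in>N. cap \<Omega> (lo j))"
  defines "c \<equiv> \<Omega> / real (card N)"
  shows "sum (share N lo hi \<Omega>) N = \<Omega>"
    and "i \<in> N \<Longrightarrow> 0 \<le> share N lo hi \<Omega> i \<and> min (lo i) (ennreal c) \<le> ennreal (share N lo hi \<Omega> i)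
           \<and> ennreal (share N lo hi \<Omega> i) \<le> lo i"
proof -
  have c: "0 \<le> c" "c \<le> \<Omega>" "sum (\<lambda>_. c) N = \<Omega>"
    using equal_share[OF N \<Omega>] by (simp_all add: c_def)
  have "sum (\<lambda>j. min (cap \<Omega> (lo j)) c) N \<le> sum (\<lambda>_. c) N"
    by (rule sum_mono) simp
  then have bounds: "finite N" "\<And>j. j \<in> N \<Longrightarrow> min (cap \<Omega> (lo j)) c \<le> cap \<Omega> (lo j)"
      "sum (\<lambda>j. min (cap \<Omega> (lo j)) c) N \<le> \<Omega>" "\<Omega> \<le> (\<Sum>j\<in>N. cap \<Omega> (lo j))"
    using N c demand by simp_all
  have eq: "share N lo hi \<Omega> = interpolate N (\<lambda>j. min (cap \<Omega> (lo j)) c) (\<lambda>j. cap \<Omega> (lo j)) \<Omega>"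
    using demand unfolding share_def c_def Let_def by simp
  show "sum (share N lo hi \<Omega>) N = \<Omega>"
    unfolding eq by (rule interpolate_sum[OF bounds])
  assume "i \<in> N"
  note b = interpolate_bounds[OF bounds this, folded eq]
  have "0 \<le> share N lo hi \<Omega> i"
    using b(1) c(1) cap_nonneg[of \<Omega> "lo i"] by linarith
  moreover have "min (lo i) (ennreal c) \<le> ennreal (share N lo hi \<Omega> i)"
  proof -
    have "ennreal (min (cap \<Omega> (lo i)) c) = min (min (lo i) (ennreal \<Omega>)) (ennreal c)"
      using c(1) cap_nonneg[of \<Omega> "lo i"] by (simp add: min_ennreal[symmetric] ennreal_cap)
    moreover have "min (lo i) (ennreal c) \<le> min (min (lo i) (ennreal \<Omega>)) (ennreal c)"
      using ennreal_leI[OF c(2)] by (auto simp: min_def)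
    ultimately have "min (lo i) (ennreal c) \<le> ennreal (min (cap \<Omega> (lo i)) c)"
      by simp
    also have "\<dots> \<le> ennreal (share N lo hi \<Omega> i)"
      using b(1) by (rule ennreal_leI)
    finally show ?thesis .
  qed
  moreover have "ennreal (share N lo hi \<Omega> i) \<le> lo i"
    using ennreal_leI[OF b(2)] ennreal_cap[of \<Omega> "lo i"] by simp
  ultimately show "0 \<le> share N lo hi \<Omega> i \<and> min (lo i) (ennreal c) \<le> ennreal (share N lo hi \<Omega> i)
           \<and> ennreal (share N lo hi \<Omega> i) \<le> lo i" by blast
qed

lemma share_right_of_plateaus:
  assumes N: "finite N" "N \<noteq> {}" and \<Omega>: "0 \<le> \<Omega>"
    and no_overdemand: "\<not> \<Omega> \<le> (\<Sum>j\<in>N. cap \<Omega> (lo j))" and underdemand: "(\<Sum>j\<in>N. cap \<Omega> (hi j)) < \<Omega>"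
  defines "c \<equiv> \<Omega> / real (card N)"
  shows "sum (share N lo hi \<Omega>) N = \<Omega>"
    and "i \<in> N \<Longrightarrow> 0 \<le> share N lo hi \<Omega> i \<and> hi i \<le> ennreal (share N lo hi \<Omega> i)
           \<and> ennreal (share N lo hi \<Omega> i) \<le> max (hi i) (ennreal c)"
proof -
  have c: "0 \<le> c" "sum (\<lambda>_. c) N = \<Omega>"
    using equal_share[OF N \<Omega>] by (simp_all add: c_def)
  have "sum (\<lambda>_. c) N \<le> sum (\<lambda>j. max (cap \<Omega> (hi j)) c) N"
    by (rule sum_mono) simp
  then have bounds: "finite N" "\<And>j. j \<in> N \<Longrightarrow> cap \<Omega> (hi j) \<le> max (cap \<Omega> (hi j)) c"
      "(\<Sum>j\<in>N. cap \<Omega> (hi j)) \<le> \<Omega>" "\<Omega> \<le> sum (\<lambda>j. max (cap \<Omega> (hi j)) c) N"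
    using N c underdemand by simp_all
  have eq: "share N lo hi \<Omega> = interpolate N (\<lambda>j. cap \<Omega> (hi j)) (\<lambda>j. max (cap \<Omega> (hi j)) c) \<Omega>"
    using no_overdemand underdemand unfolding share_def c_def Let_def by simp
  show "sum (share N lo hi \<Omega>) N = \<Omega>"
    unfolding eq by (rule interpolate_sum[OF bounds])
  assume i: "i \<in> N"
  note b = interpolate_bounds[OF bounds i, folded eq]
  have "cap \<Omega> (hi i) \<le> (\<Sum>j\<in>N. cap \<Omega> (hi j))"
    by (rule member_le_sum[OF i cap_nonneg N(1)])
  then have hi: "ennreal (cap \<Omega> (hi i)) = hi i"
    using underdemand by (intro cap_less_imp_eq) simp
  have "0 \<le> share N lo hi \<Omega> i"
    using b(1) cap_nonneg[of \<Omega> "hi i"] by linarith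
  moreover have "hi i \<le> ennreal (share N lo hi \<Omega> i)"
    using ennreal_leI[OF b(1)] hi by simp
  moreover have "ennreal (share N lo hi \<Omega> i) \<le> max (hi i) (ennreal c)"
  proof -
    have "mono ennreal"
      by (rule monoI) (rule ennreal_leI)
    then have "max (hi i) (ennreal c) = ennreal (max (cap \<Omega> (hi i)) c)"
      using max_of_mono hi by metis
    then show ?thesis
      using ennreal_leI[OF b(2)] by simp
  qed
  ultimately show "0 \<le> share N lo hi \<Omega> i \<and> hi i \<le> ennreal (share N lo hi \<Omega> i)
           \<and> ennreal (share N lo hi \<Omega> i) \<le> max (hi i) (ennreal c)" by blast
qed

lemma share_on_plateaus:
  assumes N: "finite N" and lo_le_hi: "\<And>j. j \<in> N \<Longrightarrow> lo j \<le> hi j"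
    and no_overdemand: "\<not> \<Omega> \<le> (\<Sum>j\<in>N. cap \<Omega> (lo j))"
    and no_underdemand: "\<not> (\<Sum>j\<in>N. cap \<Omega> (hi j)) < \<Omega>"
  shows "sum (share N lo hi \<Omega>) N = \<Omega>"
    and "i \<in> N \<Longrightarrow> 0 \<le> share N lo hi \<Omega> i \<and> lo i \<le> ennreal (share N lo hi \<Omega> i)
           \<and> ennreal (share N lo hi \<Omega> i) \<le> hi i"
proof -
  have bounds: "finite N" "\<And>j. j \<in> N \<Longrightarrow> cap \<Omega> (lo j) \<le> cap \<Omega> (hi j)"
      "(\<Sum>j\<in>N. cap \<Omega> (lo j)) \<le> \<Omega>" "\<Omega> \<le> (\<Sum>j\<in>N. cap \<Omega> (hi j))"
    using N lo_le_hi no_overdemand no_underdemand by (simp_all add: cap_mono)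
  have eq: "share N lo hi \<Omega> = interpolate N (\<lambda>j. cap \<Omega> (lo j)) (\<lambda>j. cap \<Omega> (hi j)) \<Omega>"
    using no_overdemand no_underdemand unfolding share_def Let_def by simp
  show "sum (share N lo hi \<Omega>) N = \<Omega>"
    unfolding eq by (rule interpolate_sum[OF bounds])
  assume i: "i \<in> N"
  note b = interpolate_bounds[OF bounds i, folded eq]
  have "cap \<Omega> (lo i) \<le> (\<Sum>j\<in>N. cap \<Omega> (lo j))"
    by (rule member_le_sum[OF i cap_nonneg N(1)])
  then have lo: "ennreal (cap \<Omega> (lo i)) = lo i"
    using no_overdemand by (intro cap_less_imp_eq) simp
  have "0 \<le> share N lo hi \<Omega> i"
    using b(1) cap_nonneg[of \<Omega> "lo i"] by linarith
  moreover have "lo i \<le> ennreal (share N lo hi \<Omega> i)"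
    using ennreal_leI[OF b(1)] lo by simp
  moreover have "ennreal (share N lo hi \<Omega> i) \<le> hi i"
    using ennreal_leI[OF b(2)] ennreal_cap[of \<Omega> "hi i"] by simp
  ultimately show "0 \<le> share N lo hi \<Omega> i \<and> lo i \<le> ennreal (share N lo hi \<Omega> i)
           \<and> ennreal (share N lo hi \<Omega> i) \<le> hi i" by blast
qed

lemma share_cases:
  assumes N: "finite N" "N \<noteq> {}" and \<Omega>: "0 \<le> \<Omega>" and lo_le_hi: "\<And>j. j \<in> N \<Longrightarrow> lo j \<le> hi j"
  defines "c \<equiv> ennreal (\<Omega> / real (card N))" and "\<phi> \<equiv> share N lo hi \<Omega>"
  shows "sum \<phi> N = \<Omega>" "\<And>i. i \<in> N \<Longrightarrow> 0 \<le> \<phi> i"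
    "(\<forall>i\<in>N. min (lo i) c \<le> ennreal (\<phi> i) \<and> ennreal (\<phi> i) \<le> lo i)
     \<or> (\<forall>i\<in>N. hi i \<le> ennreal (\<phi> i) \<and> ennreal (\<phi> i) \<le> max (hi i) c)
     \<or> (\<forall>i\<in>N. lo i \<le> ennreal (\<phi> i) \<and> ennreal (\<phi> i) \<le> hi i)"
proof -
  consider (over) "\<Omega> \<le> (\<Sum>j\<in>N. cap \<Omega> (lo j))"
    | (under) "\<not> \<Omega> \<le> (\<Sum>j\<in>N. cap \<Omega> (lo j))" "(\<Sum>j\<in>N. cap \<Omega> (hi j)) < \<Omega>"
    | (plateaus) "\<not> \<Omega> \<le> (\<Sum>j\<in>N. cap \<Omega> (lo j))" "\<not> (\<Sum>j\<in>N. cap \<Omega> (hi j)) < \<Omega>"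
    by blast
  then have "sum \<phi> N = \<Omega> \<and> (\<forall>i\<in>N. 0 \<le> \<phi> i) \<and>
    ((\<forall>i\<in>N. min (lo i) c \<le> ennreal (\<phi> i) \<and> ennreal (\<phi> i) \<le> lo i)
     \<or> (\<forall>i\<in>N. hi i \<le> ennreal (\<phi> i) \<and> ennreal (\<phi> i) \<le> max (hi i) c)
     \<or> (\<forall>i\<in>N. lo i \<le> ennreal (\<phi> i) \<and> ennreal (\<phi> i) \<le> hi i))"
  proof cases
    case over
    then show ?thesis
      using share_left_of_plateaus[OF N \<Omega> over] unfolding c_def \<phi>_def by blast
  next
    case under
    then show ?thesis
      using share_right_of_plateaus[OF N \<Omega> under] unfolding c_def \<phi>_def by blast
  next
    case plateaus
    then show ?thesis
      using share_on_plateaus[OF N(1) lo_le_hi plateaus] unfolding \<phi>_def by blast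
  qed
  then show "sum \<phi> N = \<Omega>" "\<And>i. i \<in> N \<Longrightarrow> 0 \<le> \<phi> i"
    "(\<forall>i\<in>N. min (lo i) c \<le> ennreal (\<phi> i) \<and> ennreal (\<phi> i) \<le> lo i)
     \<or> (\<forall>i\<in>N. hi i \<le> ennreal (\<phi> i) \<and> ennreal (\<phi> i) \<le> max (hi i) c)
     \<or> (\<forall>i\<in>N. lo i \<le> ennreal (\<phi> i) \<and> ennreal (\<phi> i) \<le> hi i)"
    by blast+
qed

definition proportional_rule :: "nat \<Rightarrow> rule" where
  "proportional_rule n R \<Omega> = share (agents n) (\<lambda>j. peak_lo (R j)) (\<lambda>j. peak_hi (R j)) \<Omega>"

lemma proportional_rule_cases:
  assumes "0 < n" "R \<in> profiles SPL n" "0 < \<Omega>"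
  defines "c \<equiv> ennreal (\<Omega> / real n)" and "\<phi> \<equiv> proportional_rule n R \<Omega>"
  shows "sum \<phi> (agents n) = \<Omega>" "\<And>i. i \<in> agents n \<Longrightarrow> 0 \<le> \<phi> i"
    "(\<forall>i\<in>agents n. min (peak_lo (R i)) c \<le> ennreal (\<phi> i) \<and> ennreal (\<phi> i) \<le> peak_lo (R i))
     \<or> (\<forall>i\<in>agents n. peak_hi (R i) \<le> ennreal (\<phi> i) \<and> ennreal (\<phi> i) \<le> max (peak_hi (R i)) c)
     \<or> (\<forall>i\<in>agents n. ennreal (\<phi> i) \<in> peak (R i))"
proof -
  have N: "finite (agents n)" "agents n \<noteq> {}"
    using assms(1) by (auto simp: finite_agents agents_def)
  have SPL: "R i \<in> SPL" if "i \<in> agents n" for i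
    using profiles_mem[OF assms(2) that] .
  then have "peak_lo (R i) \<le> peak_hi (R i)" if "i \<in> agents n" for i
    using peak_lo_le_peak_hi SPL_subset_U that by blast
  note cases = share_cases[OF N less_imp_le[OF assms(3)] this, folded proportional_rule_def]
  show "sum \<phi> (agents n) = \<Omega>" "\<And>i. i \<in> agents n \<Longrightarrow> 0 \<le> \<phi> i"
    using cases(1,2) unfolding \<phi>_def by auto
  show "(\<forall>i\<in>agents n. min (peak_lo (R i)) c \<le> ennreal (\<phi> i) \<and> ennreal (\<phi> i) \<le> peak_lo (R i))
     \<or> (\<forall>i\<in>agents n. peak_hi (R i) \<le> ennreal (\<phi> i) \<and> ennreal (\<phi> i) \<le> max (peak_hi (R i)) c)
     \<or> (\<forall>i\<in>agents n. ennreal (\<phi> i) \<in> peak (R i))"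
    using cases(3) SPL unfolding SPL_def c_def \<phi>_def card_agents by auto
qed

lemma is_rule_proportional_rule: "0 < n \<Longrightarrow> is_rule SPL n (proportional_rule n)"
  unfolding is_rule_def using proportional_rule_cases(1,2) by blast

lemma own_peak_only_proportional_rule: "own_peak_only SPL n (proportional_rule n)"
  unfolding own_peak_only_def
proof (intro ballI allI impI)
  fix R :: "nat \<Rightarrow> pref" and \<Omega> :: real and i :: nat and R' :: pref
  assume "peak R' = peak (R i)"
  then have "(\<lambda>j. peak_lo ((R(i := R')) j)) = (\<lambda>j. peak_lo (R j))"
    "(\<lambda>j. peak_hi ((R(i := R')) j)) = (\<lambda>j. peak_hi (R j))"
    unfolding peak_lo_def peak_hi_def by auto
  then show "proportional_rule n R \<Omega> i = proportional_rule n (R(i := R')) \<Omega> i"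
    unfolding proportional_rule_def by simp
qed

lemma proportional_rule_pref_equal_division:
  assumes "0 < n" "R \<in> profiles SPL n" "0 < \<Omega>" and i: "i \<in> agents n"
  shows "R i (ennreal (proportional_rule n R \<Omega> i)) (ennreal (\<Omega> / real n))"
proof -
  have R: "R i \<in> SPL"
    using profiles_mem[OF assms(2) i] .
  have nonneg: "0 \<le> proportional_rule n R \<Omega> i" "0 \<le> \<Omega> / real n"
    using proportional_rule_cases(2)[OF assms] assms(3) by simp_all
  from proportional_rule_cases(3)[OF assms(1-3)] show ?thesis
  proof (elim disjE)
    assume "\<forall>i\<in>agents n. min (peak_lo (R i)) (ennreal (\<Omega> / real n)) \<le> ennreal (proportional_rule n R \<Omega> i)
      \<and> ennreal (proportional_rule n R \<Omega> i) \<le> peak_lo (R i)"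
    then show ?thesis
      using SPL_pref_toward_plateau_left[OF R nonneg(2,1)] i by blast
  next
    assume "\<forall>i\<in>agents n. peak_hi (R i) \<le> ennreal (proportional_rule n R \<Omega> i)
      \<and> ennreal (proportional_rule n R \<Omega> i) \<le> max (peak_hi (R i)) (ennreal (\<Omega> / real n))"
    then show ?thesis
      using SPL_pref_toward_plateau_right[OF R nonneg(2,1)] i by blast
  next
    assume "\<forall>i\<in>agents n. ennreal (proportional_rule n R \<Omega> i) \<in> peak (R i)"
    then show ?thesis
      using peak_best i by blast
  qed
qed

lemma efficient_proportional_rule: "0 < n \<Longrightarrow> efficient SPL n (proportional_rule n)"
  unfolding efficient_def
proof (intro ballI allI impI notI, elim exE conjE bexE)
  fix R \<Omega> x k
  assume n: "0 < n" and R: "R \<in> profiles SPL n" and \<Omega>: "0 < \<Omega>"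
    and x: "\<forall>i\<in>agents n. 0 \<le> x i" "(\<Sum>i\<in>agents n. x i) = \<Omega>"
      "\<forall>i\<in>agents n. R i (ennreal (x i)) (ennreal (proportional_rule n R \<Omega> i))"
    and k: "k \<in> agents n" "strict (R k) (ennreal (x k)) (ennreal (proportional_rule n R \<Omega> k))"
  note cases = proportional_rule_cases[OF n R \<Omega>]
  have "\<not> strict (R k) (ennreal (x k)) (ennreal (proportional_rule n R \<Omega> k))"
  proof (rule SPL_no_pareto_improvement[OF finite_agents])
    show "(\<forall>i\<in>agents n. ennreal (proportional_rule n R \<Omega> i) \<le> peak_lo (R i))
      \<or> (\<forall>i\<in>agents n. peak_hi (R i) \<le> ennreal (proportional_rule n R \<Omega> i))
      \<or> (\<forall>i\<in>agents n. ennreal (proportional_rule n R \<Omega> i) \<in> peak (R i))"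
      using cases(3) by blast
  qed (use profiles_mem[OF R] cases(1,2) x k in auto)
  then show False
    using k(2) by blast
qed

lemma equal_division_guarantee_proportional_rule:
  "0 < n \<Longrightarrow> equal_division_guarantee SPL n (proportional_rule n)"
  unfolding equal_division_guarantee_def indiff_def
  using proportional_rule_pref_equal_division peak_best by blast

lemma good_rule_proportional_rule:
  assumes "0 < n"
  shows "good_rule SPL n (proportional_rule n)"
proof -
  have "NOM SPL n (proportional_rule n)"
    using NOM_iff_pref_equal_division[OF order_refl SPL_subset_U is_rule_proportional_rule[OF assms]
        equal_division_guarantee_proportional_rule[OF assms]]
      proportional_rule_pref_equal_division[OF assms] by blast
  then show ?thesis
    unfolding good_rule_def
    using assms is_rule_proportional_rule own_peak_only_proportional_rule efficient_proportional_rule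
      equal_division_guarantee_proportional_rule by blast
qed

section \<open>No good rule on a larger domain\<close>

definition test_profile :: "nat \<Rightarrow> pref \<Rightarrow> pref \<Rightarrow> pref \<Rightarrow> nat \<Rightarrow> pref" where
  "test_profile n R\<^sub>1 R\<^sub>2 R\<^sub>0 = restrict (\<lambda>j. if j = 1 then R\<^sub>1 else if j = 2 then R\<^sub>2 else R\<^sub>0) (agents n)"

lemma test_profile_in_profiles:
  "R\<^sub>1 \<in> D \<Longrightarrow> R\<^sub>2 \<in> D \<Longrightarrow> R\<^sub>0 \<in> D \<Longrightarrow> test_profile n R\<^sub>1 R\<^sub>2 R\<^sub>0 \<in> profiles D n"
  unfolding test_profile_def by (rule restrict_in_profiles) simp

lemma test_profile_1: "2 \<le> n \<Longrightarrow> test_profile n R\<^sub>1 R\<^sub>2 R\<^sub>0 1 = R\<^sub>1"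
  unfolding test_profile_def agents_def by simp

lemma test_profile_2: "2 \<le> n \<Longrightarrow> test_profile n R\<^sub>1 R\<^sub>2 R\<^sub>0 2 = R\<^sub>2"
  unfolding test_profile_def agents_def by simp

lemma test_profile_other: "j \<in> agents n \<Longrightarrow> j \<notin> {1, 2} \<Longrightarrow> test_profile n R\<^sub>1 R\<^sub>2 R\<^sub>0 j = R\<^sub>0"
  unfolding test_profile_def by simp

lemma test_profile_upd_2:
  "2 \<in> agents n \<Longrightarrow> (test_profile n R\<^sub>1 R\<^sub>2 R\<^sub>0)(2 := R\<^sub>2') = test_profile n R\<^sub>1 R\<^sub>2' R\<^sub>0"
  unfolding test_profile_def by (auto simp: fun_eq_iff)

locale good_rule_on_extension =
  fixes n :: nat and D :: "pref set" and \<phi> :: rule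
  assumes two_le_n: "2 \<le> n" and SPL_subset: "SPL \<subseteq> D" and subset_U: "D \<subseteq> U"
    and good: "good_rule D n \<phi>"
begin

lemma \<phi>_is_rule: "is_rule D n \<phi>"
  using good unfolding good_rule_def by blast

lemma \<phi>_edg: "equal_division_guarantee D n \<phi>"
  using good unfolding good_rule_def by blast

lemma share_nonneg: "R \<in> profiles D n \<Longrightarrow> 0 < \<Omega> \<Longrightarrow> i \<in> agents n \<Longrightarrow> 0 \<le> \<phi> R \<Omega> i"
  using \<phi>_is_rule unfolding is_rule_def by blast

lemma equal_division_scaled [simp]: "real n * c / real n = c"
  using two_le_n by simp

lemma in_D_if_SPL: "R \<in> SPL \<Longrightarrow> R \<in> D"
  using SPL_subset by blast

lemma in_U_if_D: "R \<in> D \<Longrightarrow> R \<in> U"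
  using subset_U by blast

lemma pref_equal_division:
  "R \<in> profiles D n \<Longrightarrow> 0 < \<Omega> \<Longrightarrow> i \<in> agents n \<Longrightarrow> R i (ennreal (\<phi> R \<Omega> i)) (ennreal (\<Omega> / real n))"
  using NOM_iff_pref_equal_division[OF SPL_subset subset_U \<phi>_is_rule] good unfolding good_rule_def by blast

lemma share_fun_upd_same_peak:
  "R \<in> profiles D n \<Longrightarrow> 0 < \<Omega> \<Longrightarrow> i \<in> agents n \<Longrightarrow> S \<in> D \<Longrightarrow> peak S = peak (R i)
    \<Longrightarrow> \<phi> (R(i := S)) \<Omega> i = \<phi> R \<Omega> i"
  using good unfolding good_rule_def own_peak_only_def by metis

lemma pref_equal_division_same_peak:
  assumes "R \<in> profiles D n" "0 < \<Omega>" "i \<in> agents n" "S \<in> D" "peak S = peak (R i)"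
  shows "S (ennreal (\<phi> R \<Omega> i)) (ennreal (\<Omega> / real n))"
  using pref_equal_division[OF profiles_fun_upd[OF assms(1,3,4)] assms(2,3)]
    share_fun_upd_same_peak[OF assms] by simp

lemma equal_division_le_share:
  assumes R: "R \<in> profiles D n" and \<Omega>: "0 < \<Omega>" and i: "i \<in> agents n"
    and interval: "peak (R i) = {peak_lo (R i)..peak_hi (R i)}"
    and below: "ennreal (\<Omega> / real n) \<le> peak_lo (R i)"
  shows "\<Omega> / real n \<le> \<phi> R \<Omega> i"
proof -
  define S where "S = plateau (peak_lo (R i)) (peak_hi (R i)) 1"
  have "peak_lo (R i) \<le> peak_hi (R i)"
    using peak_lo_le_peak_hi in_U_if_D profiles_mem[OF R i] by blast
  then have S: "S \<in> SPL" "peak S = peak (R i)" "peak_lo S = peak_lo (R i)"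
    unfolding S_def using interval by (simp_all add: plateau_in_SPL peak_plateau peak_lo_plateau)
  show ?thesis
    using pref_equal_division_same_peak[OF R \<Omega> i in_D_if_SPL[OF S(1)] S(2)]
      SPL_ge_if_pref_left[OF S(1)] share_nonneg[OF R \<Omega> i] below S(3) \<Omega> by simp
qed

lemma share_le_equal_division:
  assumes R: "R \<in> profiles D n" and \<Omega>: "0 < \<Omega>" and i: "i \<in> agents n"
    and interval: "peak (R i) = {peak_lo (R i)..peak_hi (R i)}"
    and above: "peak_hi (R i) \<le> ennreal (\<Omega> / real n)"
  shows "\<phi> R \<Omega> i \<le> \<Omega> / real n"
proof -
  define S where "S = plateau (peak_lo (R i)) (peak_hi (R i)) 1"
  have "peak_lo (R i) \<le> peak_hi (R i)"
    using peak_lo_le_peak_hi in_U_if_D profiles_mem[OF R i] by blast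
  then have S: "S \<in> SPL" "peak S = peak (R i)" "peak_hi S = peak_hi (R i)"
    unfolding S_def using interval by (simp_all add: plateau_in_SPL peak_plateau peak_hi_plateau)
  show ?thesis
    using pref_equal_division_same_peak[OF R \<Omega> i in_D_if_SPL[OF S(1)] S(2)]
      SPL_le_if_pref_right[OF S(1)] above S(3) \<Omega> by simp
qed

text \<open>Replace the agent by a single-peaked one that is so steep to the right of \<open>q\<close> that it
  prefers \<open>\<Omega>/n\<close> to any share above \<open>q\<close>.\<close>

lemma share_le_point_peak:
  assumes R: "R \<in> profiles D n" and \<Omega>: "0 < \<Omega>" and i: "i \<in> agents n"
    and peak: "peak (R i) = {ennreal q}" and above: "\<Omega> / real n < q"
  shows "\<phi> R \<Omega> i \<le> q"
proof (rule ccontr)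
  assume "\<not> \<phi> R \<Omega> i \<le> q"
  moreover have "0 \<le> \<Omega> / real n"
    using \<Omega> by simp
  ultimately obtain k where
    k: "0 < k" "strict (plateau (ennreal q) (ennreal q) k) (ennreal (\<Omega> / real n)) (ennreal (\<phi> R \<Omega> i))"
    using plateau_steep_right[of "ennreal (\<Omega> / real n)" "ennreal q" "ennreal (\<phi> R \<Omega> i)"] above
    by (auto simp: ennreal_less_iff)
  have "plateau (ennreal q) (ennreal q) k \<in> D" "peak (plateau (ennreal q) (ennreal q) k) = peak (R i)"
    using k(1) peak by (simp_all add: in_D_if_SPL plateau_in_SPL peak_plateau)
  then show False
    using pref_equal_division_same_peak[OF R \<Omega> i] k(2) unfolding strict_def by blast
qed

lemma test_profile_shares:
  assumes "R\<^sub>1 \<in> D" "R\<^sub>2 \<in> D" "0 < c"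
  defines "P \<equiv> test_profile n R\<^sub>1 R\<^sub>2 (plateau (ennreal c) (ennreal c) 1)"
  shows "P \<in> profiles D n" "\<phi> P (real n * c) 1 + \<phi> P (real n * c) 2 = 2 * c"
proof -
  have C: "plateau (ennreal c) (ennreal c) 1 \<in> D"
    by (simp add: in_D_if_SPL plateau_in_SPL)
  show P: "P \<in> profiles D n"
    unfolding P_def using assms(1,2) C by (rule test_profile_in_profiles)
  have \<Omega>: "0 < real n * c"
    using two_le_n assms(3) by simp
  have "\<phi> P (real n * c) j = real n * c / real n" if "j \<in> agents n" "j \<notin> {1, 2}" for j
    by (rule share_eq_equal_division_if_point_peak[OF \<phi>_is_rule \<phi>_edg P \<Omega> that(1)])
      (use that in \<open>simp_all add: P_def test_profile_other plateau_in_U peak_plateau\<close>)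
  then have "real n * c = \<phi> P (real n * c) 1 + \<phi> P (real n * c) 2 + real (n - 2) * c"
    using sum_agents_except[of "{1, 2}" n "\<phi> P (real n * c)" c] \<phi>_is_rule P \<Omega> one_two_in_agents[OF two_le_n]
    unfolding is_rule_def by (simp add: numeral_2_eq_2)
  then show "\<phi> P (real n * c) 1 + \<phi> P (real n * c) 2 = 2 * c"
    using two_le_n by (simp add: of_nat_diff algebra_simps)
qed

lemma increasing_left_of_peak:
  assumes R: "R \<in> D" and interval: "peak R = {peak_lo R..peak_hi R}"
    and ba: "0 \<le> b" "b < a" and a: "ennreal a \<le> peak_lo R"
  shows "strict R (ennreal a) (ennreal b)"
proof (rule ccontr)
  assume "\<not> strict R (ennreal a) (ennreal b)"
  then have pref: "R (ennreal b) (ennreal a)"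
    using U_not_strict_iff in_U_if_D[OF R] by blast
  define \<Omega> where "\<Omega> = real n * a"
  define T where "T = plateau (ennreal \<Omega>) (ennreal \<Omega>) 1"
  define P where "P = test_profile n R T (plateau (ennreal a) (ennreal a) 1)"
  have T: "T \<in> SPL" "peak T = {ennreal \<Omega>}" "peak_lo T = ennreal \<Omega>" "peak_hi T = ennreal \<Omega>"
    by (simp_all add: T_def plateau_in_SPL peak_plateau peak_lo_plateau peak_hi_plateau)
  have "0 < a" "0 < \<Omega>" "a \<le> \<Omega>"
    using ba two_le_n by (simp_all add: \<Omega>_def)
  note shares = test_profile_shares[OF R in_D_if_SPL[OF T(1)] \<open>0 < a\<close>, folded P_def \<Omega>_def]
  have 1: "1 \<in> agents n" and 2: "2 \<in> agents n"
    using one_two_in_agents two_le_n by auto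
  have P: "P 1 = R" "P 2 = T"
    unfolding P_def by (rule test_profile_1[OF two_le_n], rule test_profile_2[OF two_le_n])
  have "a \<le> \<phi> P \<Omega> 1" "a \<le> \<phi> P \<Omega> 2"
    using equal_division_le_share[OF shares(1) \<open>0 < \<Omega>\<close> 1] equal_division_le_share[OF shares(1) \<open>0 < \<Omega>\<close> 2]
      interval a T(2-4) ennreal_leI[OF \<open>a \<le> \<Omega>\<close>] unfolding P by (simp_all add: \<Omega>_def)
  then have "\<phi> P \<Omega> 1 = a" "\<phi> P \<Omega> 2 = a"
    using shares(2) by linarith+
  moreover have "strict T (ennreal (2 * a - b)) (ennreal a)"
  proof -
    have "2 * a \<le> real n * a"
      using two_le_n \<open>0 < a\<close> by (intro mult_right_mono) simp_all
    then have "2 * a - b \<le> real n * a"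
      using ba by linarith
    then show ?thesis
      using SPL_strict_left[OF T(1), of a "2 * a - b"] ba T(3) by (simp add: \<Omega>_def)
  qed
  ultimately have "\<not> efficient D n \<phi>"
    using ba pref P
    by (intro not_efficient_if_transfer[OF \<phi>_is_rule subset_U shares(1) \<open>0 < \<Omega>\<close> 1 2, of b "2 * a - b"])
      simp_all
  then show False
    using good unfolding good_rule_def by blast
qed

lemma decreasing_right_of_peak_within_double:
  assumes R: "R \<in> D" and interval: "peak R = {peak_lo R..peak_hi R}"
    and ab: "0 \<le> a" "a < b" "b \<le> 2 * a" and a: "peak_hi R \<le> ennreal a"
  shows "strict R (ennreal a) (ennreal b)"
proof (rule ccontr)
  assume "\<not> strict R (ennreal a) (ennreal b)"
  then have pref: "R (ennreal b) (ennreal a)"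
    using U_not_strict_iff in_U_if_D[OF R] by blast
  define \<Omega> where "\<Omega> = real n * a"
  define T where "T = plateau 0 0 1"
  define P where "P = test_profile n R T (plateau (ennreal a) (ennreal a) 1)"
  have T: "T \<in> SPL" "peak T = {0}" "peak_lo T = 0" "peak_hi T = 0"
    by (simp_all add: T_def plateau_in_SPL peak_plateau peak_lo_plateau peak_hi_plateau)
  have "0 < a" "0 < \<Omega>"
    using ab two_le_n by (simp_all add: \<Omega>_def)
  note shares = test_profile_shares[OF R in_D_if_SPL[OF T(1)] \<open>0 < a\<close>, folded P_def \<Omega>_def]
  have 1: "1 \<in> agents n" and 2: "2 \<in> agents n"
    using one_two_in_agents two_le_n by auto
  have P: "P 1 = R" "P 2 = T"
    unfolding P_def by (rule test_profile_1[OF two_le_n], rule test_profile_2[OF two_le_n])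
  have "\<phi> P \<Omega> 1 \<le> a" "\<phi> P \<Omega> 2 \<le> a"
    using share_le_equal_division[OF shares(1) \<open>0 < \<Omega>\<close> 1] share_le_equal_division[OF shares(1) \<open>0 < \<Omega>\<close> 2]
      interval a T(2-4) unfolding P by (simp_all add: \<Omega>_def)
  then have "\<phi> P \<Omega> 1 = a" "\<phi> P \<Omega> 2 = a"
    using shares(2) by linarith+
  moreover have "strict T (ennreal (2 * a - b)) (ennreal a)"
    using SPL_strict_right[OF T(1), of "2 * a - b" a] ab T(4) by simp
  ultimately have "\<not> efficient D n \<phi>"
    using ab pref P
    by (intro not_efficient_if_transfer[OF \<phi>_is_rule subset_U shares(1) \<open>0 < \<Omega>\<close> 1 2, of b "2 * a - b"])
      simp_all
  then show False
    using good unfolding good_rule_def by blast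
qed

text \<open>Walk from \<open>a\<close> to \<open>b\<close> in steps small enough for the previous lemma; transitivity forbids
  every step from being an improvement.\<close>

lemma decreasing_right_of_peak:
  assumes R: "R \<in> D" and interval: "peak R = {peak_lo R..peak_hi R}"
    and ab: "0 \<le> a" "a < b" and a: "peak_hi R \<le> ennreal a"
  shows "strict R (ennreal a) (ennreal b)"
proof (rule ccontr)
  assume "\<not> strict R (ennreal a) (ennreal b)"
  then have pref: "R (ennreal b) (ennreal a)"
    using U_not_strict_iff in_U_if_D[OF R] by blast
  show False
  proof (cases "a = 0")
    case True
    then have "ennreal a \<in> peak R"
      using a peak_hi_in_peak[OF in_U_if_D[OF R]] by simp
    then have "ennreal b \<le> peak_hi R"
      using mem_peak_if_pref[OF in_U_if_D[OF R] _ pref] peak_subset_peak_lo_hi[of R] by auto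
    then show False
      using a ab True by simp
  next
    case False
    then have "0 < a" using ab by simp
    obtain k :: nat where k: "(b - a) / a < real k"
      using reals_Archimedean2 by blast
    moreover have "0 < (b - a) / a"
      using ab \<open>0 < a\<close> by simp
    ultimately have "0 < k"
      by (metis of_nat_0_less_iff order.strict_trans)
    define d where "d = (b - a) / real k"
    define t where "t i = a + real i * d" for i
    have "t 0 = a" "t k = b"
      using \<open>0 < k\<close> by (simp_all add: t_def d_def)
    then obtain i where "i < k" and step: "R (ennreal (t (Suc i))) (ennreal (t i))"
      using pref_chain_step[OF in_U_if_D[OF R], of "\<lambda>i. ennreal (t i)"] pref \<open>0 < k\<close> by auto
    have "d \<le> a" "0 < d"
      using k ab \<open>0 < a\<close> \<open>0 < k\<close> by (simp_all add: d_def divide_less_eq pos_divide_le_eq mult.commute)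
    moreover have "a \<le> t i"
      using \<open>0 < d\<close> by (simp add: t_def)
    moreover have "t (Suc i) = t i + d"
      by (simp add: t_def algebra_simps)
    ultimately have "0 \<le> t i" "t i < t (Suc i)" "t (Suc i) \<le> 2 * t i" "peak_hi R \<le> ennreal (t i)"
      using ab order.trans[OF a ennreal_leI[OF \<open>a \<le> t i\<close>]] by simp_all
    then show False
      using decreasing_right_of_peak_within_double[OF R interval] step unfolding strict_def by blast
  qed
qed

text \<open>Agent 1 has \<open>R\<close>, whose peak contains \<open>l\<close> but not \<open>z\<close>; agent 2 has a single peak at
  \<open>q = 2c - z\<close>; everybody else gets \<open>c\<close>. Agent 2's share \<open>X\<close> lies in \<open>[c, q]\<close>, and \<open>X = q\<close>
  would leave agent 1 with \<open>z\<close>, worse than \<open>c\<close>. So \<open>X < q < 2c - l\<close>, and making agent 2 flat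
  enough to the right of \<open>q\<close> (which does not change \<open>X\<close>) turns the move of agent 1 to \<open>l\<close> into
  a Pareto improvement.\<close>

lemma no_gap_in_peak:
  assumes R: "R \<in> D" and l: "0 \<le> l" "l < z" "ennreal l \<in> peak R"
    and c: "z < c" "strict R (ennreal c) (ennreal z)"
  shows False
proof -
  define \<Omega> q where "\<Omega> = real n * c" and "q = 2 * c - z"
  define C where "C = plateau (ennreal c) (ennreal c) 1"
  define P where "P k = test_profile n R (plateau (ennreal q) (ennreal q) k) C" for k
  have "0 < c" "c < q" "0 < \<Omega>"
    using l c two_le_n by (simp_all add: q_def \<Omega>_def)
  have Q: "plateau (ennreal q) (ennreal q) k \<in> D" "peak (plateau (ennreal q) (ennreal q) k) = {ennreal q}"
    if "0 < k" for k
    using that by (simp_all add: in_D_if_SPL plateau_in_SPL peak_plateau)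
  have shares: "P k \<in> profiles D n" "\<phi> (P k) \<Omega> 1 + \<phi> (P k) \<Omega> 2 = 2 * c" if "0 < k" for k
    using test_profile_shares[OF R Q(1)[OF that] \<open>0 < c\<close>] unfolding P_def C_def \<Omega>_def by simp_all
  have 1: "1 \<in> agents n" and 2: "2 \<in> agents n"
    using one_two_in_agents two_le_n by auto
  have P1: "P k 1 = R" and P2: "P k 2 = plateau (ennreal q) (ennreal q) k" for k
    unfolding P_def by (rule test_profile_1[OF two_le_n], rule test_profile_2[OF two_le_n])
  define X where "X = \<phi> (P 1) \<Omega> 2"
  have X: "\<phi> (P k) \<Omega> 2 = X" if "0 < k" for k
  proof -
    have "(P 1)(2 := plateau (ennreal q) (ennreal q) k) = P k"
      unfolding P_def by (rule test_profile_upd_2[OF 2])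
    moreover have "\<phi> ((P 1)(2 := plateau (ennreal q) (ennreal q) k)) \<Omega> 2 = \<phi> (P 1) \<Omega> 2"
      by (rule share_fun_upd_same_peak[OF shares(1)[OF zero_less_one] \<open>0 < \<Omega>\<close> 2 Q(1)[OF that]])
        (simp add: P2 Q(2) that)
    ultimately show ?thesis
      unfolding X_def by simp
  qed
  have "c \<le> X" "X \<le> q"
    using equal_division_le_share[OF shares(1)[OF zero_less_one] \<open>0 < \<Omega>\<close> 2]
      share_le_point_peak[OF shares(1)[OF zero_less_one] \<open>0 < \<Omega>\<close> 2]
      P2 ennreal_leI[OF less_imp_le[OF \<open>c < q\<close>]] \<open>c < q\<close>
    by (simp_all add: X_def \<Omega>_def peak_plateau peak_lo_plateau peak_hi_plateau)
  moreover have "X \<noteq> q"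
  proof
    assume "X = q"
    then have "\<phi> (P 1) \<Omega> 1 = z"
      using shares(2)[of 1] X_def q_def by simp
    then show False
      using pref_equal_division[OF shares(1)[of 1] \<open>0 < \<Omega>\<close> 1] P1 c(2)
      unfolding strict_def by (simp add: \<Omega>_def)
  qed
  ultimately obtain k where k: "0 < k" "strict (plateau (ennreal q) (ennreal q) k) (ennreal (2 * c - l)) (ennreal X)"
    using plateau_flat_right[of "ennreal X" "ennreal q" "ennreal (2 * c - l)"] \<open>0 < c\<close> l c
    by (auto simp: q_def ennreal_less_iff)
  have "\<not> efficient D n \<phi>"
    using shares(2)[OF k(1)] X[OF k(1)] k(2) P1 P2 l c(1) peak_best[OF l(3)]
    by (intro not_efficient_if_transfer[OF \<phi>_is_rule subset_U shares(1)[OF k(1)] \<open>0 < \<Omega>\<close> 1 2, of l "2 * c - l"])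
      simp_all
  then show False
    using good unfolding good_rule_def by blast
qed

lemma peak_interval:
  assumes R: "R \<in> D"
  shows "peak R = {peak_lo R..peak_hi R}"
proof (rule ccontr)
  assume "peak R \<noteq> {peak_lo R..peak_hi R}"
  then obtain w where w: "w \<in> {peak_lo R..peak_hi R}" "w \<notin> peak R"
    using peak_subset_peak_lo_hi by blast
  have RU: "R \<in> U"
    using in_U_if_D[OF R] .
  have "peak_lo R < w" "w < peak_hi R"
    using w peak_lo_in_peak[OF RU] peak_hi_in_peak[OF RU] by (auto simp: order.order_iff_strict)
  then obtain l z where lz: "0 \<le> l" "peak_lo R = ennreal l" "0 \<le> z" "w = ennreal z"
    by (metis ennreal_cases less_top order.strict_trans top.not_eq_extremum)
  have "strict R (peak_hi R) w"
    using w(2) peak_best[OF peak_hi_in_peak[OF RU]] mem_peak_if_pref[OF RU peak_hi_in_peak[OF RU]]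
    unfolding strict_def by blast
  then obtain c where "z < c" "strict R (ennreal c) (ennreal z)"
    using strictly_preferred_real_above[OF RU \<open>0 \<le> z\<close>] \<open>w < peak_hi R\<close> lz by auto
  moreover have "l < z"
    using \<open>peak_lo R < w\<close> lz by (simp add: ennreal_less_iff)
  ultimately show False
    using no_gap_in_peak[OF R \<open>0 \<le> l\<close>] peak_lo_in_peak[OF RU] lz by simp
qed

lemma subset_SPL: "D \<subseteq> SPL"
proof
  fix R
  assume R: "R \<in> D"
  have "strict R x x'"
    if "x < top" "x' < top" "x' < x \<and> x \<le> peak_lo R \<or> peak_hi R \<le> x \<and> x < x'" for x x'
  proof -
    obtain a b where "0 \<le> a" "x = ennreal a" "0 \<le> b" "x' = ennreal b"
      using \<open>x < top\<close> \<open>x' < top\<close> by (metis ennreal_cases less_top)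
    then show ?thesis
      using that(3) increasing_left_of_peak[OF R peak_interval[OF R]]
        decreasing_right_of_peak[OF R peak_interval[OF R]]
      by (auto simp: ennreal_less_iff)
  qed
  then show "R \<in> SPL"
    unfolding SPL_def using in_U_if_D[OF R] peak_interval[OF R] by auto
qed

end

theorem theorem3:
  fixes n :: nat
  assumes "2 \<le> n"
  shows "SP \<subseteq> SPL \<and> (\<exists>\<phi>. good_rule SPL n \<phi>) \<and>
         (\<forall>D. SPL \<subset> D \<and> D \<subseteq> U \<longrightarrow> \<not> (\<exists>\<phi>. good_rule D n \<phi>))"
proof (intro conjI allI impI notI)
  show "SP \<subseteq> SPL"
    by (rule SP_subset_SPL)
  show "\<exists>\<phi>. good_rule SPL n \<phi>"
    using good_rule_proportional_rule[of n] assms by auto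
next
  fix D
  assume D: "SPL \<subset> D \<and> D \<subseteq> U" and "\<exists>\<phi>. good_rule D n \<phi>"
  then obtain \<phi> where "good_rule D n \<phi>"
    by blast
  then interpret good_rule_on_extension n D \<phi>
    using assms D by unfold_locales auto
  show False
    using subset_SPL D by blast
qed

end
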